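(* Let $0<r<1$ and let $(T_1,\dots,T_d)$ be a doubly commuting tuple of operators in $C_{1,r}$ acting on a Hilbert space $\mathcal H$. Then there exists a decomposition of $\mathcal H$ into an orthogonal sum of $2^d$ closed subspaces $\mathcal H_1,\dots,\mathcal H_{2^d}$ such that: (1) every $\mathcal H_j$, $1\le j\le 2^d$, is a joint reducing subspace for $T_1,\dots,T_d$; (2) $T_i|_{\mathcal H_j}$ is either in $\mathcal C_{1,r}$ or a c.n.u. $C_{1,r}$-contraction for $1\le i\le d$, $1\le j\le 2^d$; (3) if $\Omega_d$ is the collection of all functions $\omega:\{1,\dots,d\}\to\{t_1,t_2\}$, then corresponding to every $\omega\in\Omega_d$ there is a unique subspace $\mathcal H_\ell$ ($1\le\ell\le 2^d$) such that for each $1\le j\le d$ the operator $T_j|_{\mathcal H_\ell}$ is of type $\omega(j)$; (4) $\mathcal H_1$ is the maximal joint reducing subspace for $T_1,\dots,T_d$ such that $T_1|_{\mathcal H_1},\dots,T_d|_{\mathcal H_1}$ are in $\mathcal C_{1,r}$; (5) $\mathcal H_{2^d}$ is the maximal joint reducing subspace for $T_1,\dots,T_d$ such that $T_1|_{\mathcal H_{2^d}},\dots,T_d|_{\mathcal H_{2^d}}$ are c.n.u. $C_{1,r}$-contractions. The decomposition is uniquely determined. One or more of the $\mathcal H_j$ may be $\{0\}$.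
   Context: $C_{1,r}=\{T: T\text{ invertible},\ \|T\|\le1,\ \|rT^{-1}\|\le1\}$. $\mathcal C_{1,r}$ is the class of operators $J$ on a Hilbert space $\mathcal L$ for which there exist orthogonal projections $P_0,P_1$ on $\mathcal L$ with $P_0+P_1=I_{\mathcal L}$ and $J^*J=P_0+r^2P_1$. An operator $T\in C_{1,r}$ on $\mathcal H$ is a c.n.u. $C_{1,r}$-contraction if $\mathcal H$ has no non-zero closed subspace that reduces $T$ to an operator in $\mathcal C_{1,r}$. An operator in $C_{1,r}$ is of type $t_1$ if it is in $\mathcal C_{1,r}$ and of type $t_2$ if it is a c.n.u. $C_{1,r}$-contraction. A tuple is doubly commuting if $T_iT_j=T_jT_i$ for all $i,j$ and $T_iT_j^*=T_j^*T_i$ for $i\ne j$. *)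

theory Defs
  imports "HOL-Analysis.Analysis" "HOL-Library.FuncSet"
begin

class complex_vector = real_vector +
  fixes scaleC :: "complex \<Rightarrow> 'a \<Rightarrow> 'a"
  assumes scaleC_add_right: "scaleC a (x + y) = scaleC a x + scaleC a y"
    and scaleC_add_left: "scaleC (a + b) x = scaleC a x + scaleC b x"
    and scaleC_scaleC: "scaleC a (scaleC b x) = scaleC (a * b) x"
    and scaleC_one: "scaleC 1 x = x"
    and scaleR_scaleC: "scaleR r x = scaleC (complex_of_real r) x"

class chilbert_space = complex_vector + banach +
  fixes cinner :: "'a \<Rightarrow> 'a \<Rightarrow> complex"
  assumes cinner_add_right: "cinner x (y + z) = cinner x y + cinner x z"
    and cinner_scaleC_right: "cinner x (scaleC c y) = c * cinner x y"
    and cinner_commute: "cinner x y = cnj (cinner y x)"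
    and cinner_self_nonneg: "0 \<le> Re (cinner x x)"
    and cinner_self_eq_zero: "cinner x x = 0 \<longleftrightarrow> x = 0"
    and norm_eq_sqrt_cinner: "norm x = sqrt (Re (cinner x x))"

definition closed_subspace :: "'a::chilbert_space set \<Rightarrow> bool" where
  "closed_subspace M \<longleftrightarrow> 0 \<in> M \<and> (\<forall>x\<in>M. \<forall>y\<in>M. x + y \<in> M)
     \<and> (\<forall>c. \<forall>x\<in>M. scaleC c x \<in> M) \<and> closed M"

definition orth :: "'a::chilbert_space set \<Rightarrow> 'a set" where
  "orth M = {y. \<forall>x\<in>M. cinner x y = 0}"

definition bounded_op :: "('a::chilbert_space \<Rightarrow> 'a) \<Rightarrow> bool" where
  "bounded_op T \<longleftrightarrow> (\<forall>x y. T (x + y) = T x + T y) \<and> (\<forall>c x. T (scaleC c x) = scaleC c (T x))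
     \<and> (\<exists>K. \<forall>x. norm (T x) \<le> K * norm x)"

definition adj :: "('a::chilbert_space \<Rightarrow> 'a) \<Rightarrow> ('a \<Rightarrow> 'a)" where
  "adj T = (SOME S. \<forall>x y. cinner (T x) y = cinner x (S y))"

text \<open>\<open>S\<close> is the adjoint of the restriction of \<open>J\<close> to the Hilbert space \<open>H\<close> (a closed
subspace which is invariant under \<open>J\<close>).\<close>
definition adjoint_on :: "'a::chilbert_space set \<Rightarrow> ('a \<Rightarrow> 'a) \<Rightarrow> ('a \<Rightarrow> 'a) \<Rightarrow> bool" where
  "adjoint_on H J S \<longleftrightarrow> S ` H \<subseteq> H \<and> (\<forall>x\<in>H. \<forall>y\<in>H. cinner (J x) y = cinner x (S y))"

definition orth_proj_on :: "'a::chilbert_space set \<Rightarrow> ('a \<Rightarrow> 'a) \<Rightarrow> bool" where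
  "orth_proj_on H P \<longleftrightarrow> P ` H \<subseteq> H \<and> (\<forall>x\<in>H. P (P x) = P x)
     \<and> (\<forall>x\<in>H. \<forall>y\<in>H. cinner (P x) y = cinner x (P y))"

definition reduces_in :: "'a::chilbert_space set \<Rightarrow> 'a set \<Rightarrow> ('a \<Rightarrow> 'a) \<Rightarrow> bool" where
  "reduces_in H M T \<longleftrightarrow> closed_subspace M \<and> M \<subseteq> H \<and> T ` M \<subseteq> M
     \<and> T ` (H \<inter> orth M) \<subseteq> H \<inter> orth M"

text \<open>\<open>T|_H \<in> C_{1,r}\<close>: \<open>T|_H\<close> is invertible on \<open>H\<close>, \<open>\<parallel>T|_H\<parallel> \<le> 1\<close> and \<open>\<parallel>r (T|_H)\<inverse>\<parallel> \<le> 1\<close>.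
(The operators considered are restrictions of bounded operators, so boundedness
of \<open>T|_H\<close> is inherited; boundedness of the inverse is part of the norm condition.)\<close>
definition C1r :: "'a::chilbert_space set \<Rightarrow> real \<Rightarrow> ('a \<Rightarrow> 'a) \<Rightarrow> bool" where
  "C1r H r T \<longleftrightarrow> bij_betw T H H
     \<and> (\<forall>x\<in>H. norm (T x) \<le> norm x)
     \<and> (\<forall>y\<in>H. norm (scaleR r (the_inv_into H T y)) \<le> norm y)"

definition Cscr1r :: "'a::chilbert_space set \<Rightarrow> real \<Rightarrow> ('a \<Rightarrow> 'a) \<Rightarrow> bool" where
  "Cscr1r H r J \<longleftrightarrow> (\<exists>P0 P1. orth_proj_on H P0 \<and> orth_proj_on H P1
     \<and> (\<forall>x\<in>H. P0 x + P1 x = x)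
     \<and> (\<exists>S. adjoint_on H J S \<and> (\<forall>x\<in>H. S (J x) = P0 x + scaleR (r\<^sup>2) (P1 x))))"

definition cnu :: "'a::chilbert_space set \<Rightarrow> real \<Rightarrow> ('a \<Rightarrow> 'a) \<Rightarrow> bool" where
  "cnu H r T \<longleftrightarrow> C1r H r T
     \<and> \<not> (\<exists>M. M \<noteq> {0} \<and> reduces_in H M T \<and> Cscr1r M r T)"

datatype optype = t1 | t2

fun has_type :: "'a::chilbert_space set \<Rightarrow> real \<Rightarrow> ('a \<Rightarrow> 'a) \<Rightarrow> optype \<Rightarrow> bool" where
  "has_type H r T t1 \<longleftrightarrow> C1r H r T \<and> Cscr1r H r T"
| "has_type H r T t2 \<longleftrightarrow> cnu H r T"

definition doubly_commuting :: "nat \<Rightarrow> (nat \<Rightarrow> 'a::chilbert_space \<Rightarrow> 'a) \<Rightarrow> bool" where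
  "doubly_commuting d T \<longleftrightarrow>
     (\<forall>i\<in>{1..d}. \<forall>j\<in>{1..d}. T i \<circ> T j = T j \<circ> T i)
   \<and> (\<forall>i\<in>{1..d}. \<forall>j\<in>{1..d}. i \<noteq> j \<longrightarrow> T i \<circ> adj (T j) = adj (T j) \<circ> T i)"

definition Omega :: "nat \<Rightarrow> (nat \<Rightarrow> optype) set" where
  "Omega d = {1..d} \<rightarrow>\<^sub>E (UNIV :: optype set)"

definition is_decomposition ::
    "nat \<Rightarrow> real \<Rightarrow> (nat \<Rightarrow> 'a::chilbert_space \<Rightarrow> 'a) \<Rightarrow> (nat \<Rightarrow> 'a set) \<Rightarrow> ((nat \<Rightarrow> optype) \<Rightarrow> nat) \<Rightarrow> bool" where
  "is_decomposition d r T Hs lab \<longleftrightarrow>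
     \<comment> \<open>orthogonal sum of closed subspaces equal to the whole space\<close>
     (\<forall>j\<in>{1..2^d}. closed_subspace (Hs j))
   \<and> (\<forall>j\<in>{1..2^d}. \<forall>k\<in>{1..2^d}. j \<noteq> k \<longrightarrow> (\<forall>x\<in>Hs j. \<forall>y\<in>Hs k. cinner x y = 0))
   \<and> (\<forall>x. \<exists>f. (\<forall>j\<in>{1..2^d}. f j \<in> Hs j) \<and> x = (\<Sum>j=1..2^d. f j))
     \<comment> \<open>(1) joint reducing\<close>
   \<and> (\<forall>i\<in>{1..d}. \<forall>j\<in>{1..2^d}. reduces_in UNIV (Hs j) (T i))
     \<comment> \<open>(2)\<close>
   \<and> (\<forall>i\<in>{1..d}. \<forall>j\<in>{1..2^d}. has_type (Hs j) r (T i) t1 \<or> has_type (Hs j) r (T i) t2)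
     \<comment> \<open>(3)\<close>
   \<and> bij_betw lab (Omega d) {1..2^d}
   \<and> (\<forall>\<omega>\<in>Omega d. \<forall>j\<in>{1..d}. has_type (Hs (lab \<omega>)) r (T j) (\<omega> j))
     \<comment> \<open>(4)\<close>
   \<and> (\<forall>i\<in>{1..d}. has_type (Hs 1) r (T i) t1)
   \<and> (\<forall>M. (\<forall>i\<in>{1..d}. reduces_in UNIV M (T i) \<and> has_type M r (T i) t1) \<longrightarrow> M \<subseteq> Hs 1)
     \<comment> \<open>(5)\<close>
   \<and> (\<forall>i\<in>{1..d}. has_type (Hs (2^d)) r (T i) t2)
   \<and> (\<forall>M. (\<forall>i\<in>{1..d}. reduces_in UNIV M (T i) \<and> has_type M r (T i) t2) \<longrightarrow> M \<subseteq> Hs (2^d))"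

end

theory Submission
  imports Defs "HOL-Combinatorics.Transposition"
begin

text \<open>For a single \<open>T \<in> C_{1,r}\<close>, the restriction of \<open>T\<close> to a reducing subspace \<open>M\<close> lies in
\<open>\<C>_{1,r}\<close> exactly when \<open>(T\<^sup>*T - I)(T\<^sup>*T - r\<^sup>2 I)\<close> vanishes on \<open>M\<close>; the projections are then
recovered as \<open>P0 = (T\<^sup>*T - r\<^sup>2 I)/(1 - r\<^sup>2)\<close> and \<open>P1 = I - P0\<close>. Hence the vectors all of whose
images under words in \<open>T\<close> and \<open>T\<^sup>*\<close> lie in that kernel form the largest reducing subspace \<open>L(T)\<close>
on which \<open>T\<close> is in \<open>\<C>_{1,r}\<close>, and a reducing subspace carries a c.n.u. restriction exactly when it
is orthogonal to \<open>L(T)\<close>: its intersection with \<open>L(T)\<close> is a reducing \<open>\<C>_{1,r}\<close> part, hence zero,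
and the projection onto it commutes with \<open>T\<close> and \<open>T\<^sup>*\<close>.

For a doubly commuting tuple, \<open>T\<^sub>i\<close> and \<open>T\<^sub>i\<^sup>*\<close> commute with \<open>T\<^sub>j\<close> and \<open>T\<^sub>j\<^sup>*\<close> for \<open>i \<noteq> j\<close>, so every
\<open>L(T\<^sub>j)\<close> reduces every \<open>T\<^sub>i\<close> and the projections onto the \<open>L(T\<^sub>j)\<close> commute. The \<open>2^d\<close>
intersections of the \<open>L(T\<^sub>j)\<close> and their orthogonal complements are therefore mutually orthogonal
joint reducing subspaces spanning the whole space, and by the characterisation above each of them
contains every joint reducing subspace of the corresponding type, which also gives uniqueness.\<close>

lemma cinner_add_left: "cinner (x + y) z = cinner x z + cinner y z"
  by (metis cinner_commute cinner_add_right complex_cnj_add)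

lemma cinner_scaleC_left: "cinner (scaleC c x) y = cnj c * cinner x y"
  by (metis cinner_commute cinner_scaleC_right complex_cnj_mult complex_cnj_cnj)

lemma cinner_zero_right [simp]: "cinner x 0 = 0"
  using cinner_add_right [of x 0 0] by simp

lemma cinner_zero_left [simp]: "cinner 0 x = 0"
  using cinner_add_left [of 0 0 x] by simp

lemma cinner_diff_right: "cinner x (y - z) = cinner x y - cinner x z"
  using cinner_add_right [of x "y - z" z] by (simp add: eq_diff_eq)

lemma cinner_diff_left: "cinner (x - y) z = cinner x z - cinner y z"
  using cinner_add_left [of "x - y" y z] by (simp add: eq_diff_eq)

lemma cinner_scaleR_right: "cinner x (scaleR a y) = of_real a * cinner x y"
  by (simp add: scaleR_scaleC cinner_scaleC_right)

lemma cinner_scaleR_left: "cinner (scaleR a x) y = of_real a * cinner x y"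
  by (simp add: scaleR_scaleC cinner_scaleC_left)

lemma scaleC_zero_right [simp]: "scaleC c 0 = 0"
  by (metis scaleC_add_right add_cancel_right_right)

lemma scaleC_diff_right: "scaleC c (x - y) = scaleC c x - scaleC c y"
  by (metis scaleC_add_right diff_add_cancel eq_diff_eq)

lemma scaleC_scaleR_commute: "scaleC c (scaleR a x) = scaleR a (scaleC c x)"
  by (simp add: scaleR_scaleC scaleC_scaleC mult.commute)

lemma norm_square_eq_Re_cinner: "(norm x)\<^sup>2 = Re (cinner x x)"
  by (simp add: norm_eq_sqrt_cinner cinner_self_nonneg)

lemma cinner_self_eq_norm_square: "cinner x x = of_real ((norm x)\<^sup>2)"
proof -
  have "Im (cinner x x) = 0"
    using cinner_commute [of x x] by (simp add: complex_eq_iff)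
  then show ?thesis
    by (simp add: norm_square_eq_Re_cinner complex_eq_iff)
qed

lemma cinner_ext_right:
  assumes "\<And>z. cinner z x = cinner z y"
  shows "x = y"
  using assms [of "x - y"] cinner_self_eq_zero [of "x - y"] by (simp add: cinner_diff_right)

lemma cinner_expand:
  "cinner (x - scaleC t y) (x - scaleC t y)
     = cinner x x - t * cinner x y - cnj t * cinner y x + cnj t * t * cinner y y"
  by (simp add: cinner_diff_left cinner_diff_right cinner_scaleC_left cinner_scaleC_right
      algebra_simps)

lemma norm_square_remove_component:
  assumes "y \<noteq> 0"
  shows "(norm (x - scaleC (cinner y x / of_real ((norm y)\<^sup>2)) y))\<^sup>2
           = (norm x)\<^sup>2 - (cmod (cinner y x))\<^sup>2 / (norm y)\<^sup>2"
proof -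
  define a where "a = cinner y x"
  define N where "N = (norm y)\<^sup>2"
  have N: "N > 0"
    using assms by (simp add: N_def)
  have xy: "cinner x y = cnj a"
    by (simp add: a_def cinner_commute [of x y])
  define t where "t = a / of_real N"
  have "cinner (x - scaleC t y) (x - scaleC t y) = of_real ((norm x)\<^sup>2) - of_real ((cmod a)\<^sup>2 / N)"
    unfolding cinner_expand xy cinner_self_eq_norm_square [of x] cinner_self_eq_norm_square [of y]
      N_def [symmetric] a_def [symmetric]
    using N by (simp add: t_def field_simps complex_norm_square [symmetric] power2_eq_square
        del: of_real_power)
  then have "(norm (x - scaleC t y))\<^sup>2 = (norm x)\<^sup>2 - (cmod a)\<^sup>2 / N"
    unfolding norm_square_eq_Re_cinner [of "x - scaleC t y"]
    by (simp only: Re_complex_of_real minus_complex.sel)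
  then show ?thesis
    by (simp add: t_def a_def N_def)
qed

lemma cinner_cauchy_schwarz: "cmod (cinner x y) \<le> norm x * norm y"
proof (cases "x = 0")
  case False
  have "(cmod (cinner x y))\<^sup>2 / (norm x)\<^sup>2 \<le> (norm y)\<^sup>2"
    using norm_square_remove_component [OF False, of y] by (metis diff_ge_0_iff_ge zero_le_power2)
  then have "(cmod (cinner x y))\<^sup>2 \<le> (norm y)\<^sup>2 * (norm x)\<^sup>2"
    using False by (simp add: pos_divide_le_eq)
  also have "\<dots> = (norm x * norm y)\<^sup>2"
    by (simp add: power_mult_distrib)
  finally show ?thesis
    by (rule power2_le_imp_le) simp
qed simp

lemma cinner_parallelogram:
  fixes x y :: "'a::chilbert_space"
  shows "(norm (x + y))\<^sup>2 + (norm (x - y))\<^sup>2 = 2 * (norm x)\<^sup>2 + 2 * (norm y)\<^sup>2"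
  by (simp add: norm_square_eq_Re_cinner cinner_add_left cinner_add_right cinner_diff_left
      cinner_diff_right)

lemma bounded_linear_cinner_right: "bounded_linear (cinner x)"
proof (rule bounded_linear_intro [where K = "norm x"])
  show "cinner x (r *\<^sub>R y) = r *\<^sub>R cinner x y" for r y
    by (simp add: cinner_scaleR_right scaleR_conv_of_real)
  show "norm (cinner x y) \<le> norm y * norm x" for y
    using cinner_cauchy_schwarz [of x y] by (simp add: mult.commute)
qed (rule cinner_add_right)

section \<open>Closed subspaces and orthogonal projections\<close>

lemma closed_subspace_zero: "closed_subspace M \<Longrightarrow> 0 \<in> M"
  by (simp add: closed_subspace_def)

lemma closed_subspace_add: "closed_subspace M \<Longrightarrow> x \<in> M \<Longrightarrow> y \<in> M \<Longrightarrow> x + y \<in> M"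
  by (simp add: closed_subspace_def)

lemma closed_subspace_scaleC: "closed_subspace M \<Longrightarrow> x \<in> M \<Longrightarrow> scaleC c x \<in> M"
  by (simp add: closed_subspace_def)

lemma closed_subspace_scaleR: "closed_subspace M \<Longrightarrow> x \<in> M \<Longrightarrow> scaleR c x \<in> M"
  by (simp add: closed_subspace_scaleC scaleR_scaleC)

lemma closed_subspace_diff: "closed_subspace M \<Longrightarrow> x \<in> M \<Longrightarrow> y \<in> M \<Longrightarrow> x - y \<in> M"
  using closed_subspace_add [of M x "(-1) *\<^sub>R y"] closed_subspace_scaleR [of M y "-1"] by simp

lemma closed_subspace_sum: "closed_subspace M \<Longrightarrow> (\<And>a. a \<in> A \<Longrightarrow> f a \<in> M) \<Longrightarrow> sum f A \<in> M"
  by (induction A rule: infinite_finite_induct)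
    (auto simp: closed_subspace_zero closed_subspace_add)

lemma closed_subspace_INT:
  "(\<And>i. i \<in> I \<Longrightarrow> closed_subspace (F i)) \<Longrightarrow> closed_subspace (\<Inter>i\<in>I. F i)"
  unfolding closed_subspace_def by (auto intro!: closed_INT)

lemma closed_subspace_Int: "closed_subspace A \<Longrightarrow> closed_subspace B \<Longrightarrow> closed_subspace (A \<inter> B)"
  unfolding closed_subspace_def by auto

lemma closed_subspace_orth: "closed_subspace (orth M)"
proof -
  have "closed {y. cinner x y = 0}" for x
    by (intro closed_Collect_eq continuous_intros
        bounded_linear.continuous_on [OF bounded_linear_cinner_right])
  moreover have "orth M = (\<Inter>x\<in>M. {y. cinner x y = 0})"
    by (auto simp: orth_def)
  ultimately have "closed (orth M)"
    by (metis closed_INT)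
  then show ?thesis
    unfolding closed_subspace_def orth_def by (auto simp: cinner_add_right cinner_scaleC_right)
qed

lemma cinner_orth_right: "x \<in> M \<Longrightarrow> y \<in> orth M \<Longrightarrow> cinner x y = 0"
  by (simp add: orth_def)

lemma cinner_orth_left: "x \<in> M \<Longrightarrow> y \<in> orth M \<Longrightarrow> cinner y x = 0"
  by (metis cinner_commute cinner_orth_right complex_cnj_zero)

lemma orth_Int_eq_zero: "x \<in> M \<Longrightarrow> x \<in> orth M \<Longrightarrow> x = 0"
  using cinner_self_eq_zero by (auto simp: orth_def)

lemma sum_eq_component_in_subspace:
  assumes M: "closed_subspace M" and "finite I" and "j \<in> I" and "x \<in> M" and "f j \<in> M"
    and orth: "\<And>i. i \<in> I - {j} \<Longrightarrow> f i \<in> orth M" and x: "x = sum f I"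
  shows "x = f j"
proof -
  have "x - f j = sum f (I - {j})"
    using assms by (simp add: sum.remove)
  moreover have "sum f (I - {j}) \<in> orth M"
    using orth by (rule closed_subspace_sum [OF closed_subspace_orth])
  moreover have "x - f j \<in> M"
    using assms by (simp add: closed_subspace_diff)
  ultimately show ?thesis
    using orth_Int_eq_zero by fastforce
qed

lemma dist_square_le_midpoint:
  fixes a b x :: "'a::chilbert_space"
  assumes "D \<le> (norm (x - (1/2::real) *\<^sub>R (a + b)))\<^sup>2"
  shows "(dist a b)\<^sup>2 \<le> 2 * ((norm (x - a))\<^sup>2 - D) + 2 * ((norm (x - b))\<^sup>2 - D)"
proof -
  have "(x - a) + (x - b) = 2 *\<^sub>R (x - (1/2::real) *\<^sub>R (a + b))"
    by (simp add: algebra_simps scaleR_2)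
  then have "4 * D \<le> (norm ((x - a) + (x - b)))\<^sup>2"
    using assms by (simp add: power_mult_distrib)
  then show ?thesis
    using cinner_parallelogram [of "x - a" "x - b"] by (simp add: dist_norm norm_minus_commute)
qed

lemma Cauchy_if_dist_square_le:
  assumes "\<And>k n. (dist (m k) (m n))\<^sup>2 \<le> 2 / Suc k + 2 / Suc n"
  shows "Cauchy m"
proof (rule metric_CauchyI)
  fix e :: real
  assume "e > 0"
  obtain N :: nat where N: "4 / e\<^sup>2 < N"
    using reals_Archimedean2 by blast
  have "dist (m k) (m n) < e" if "k \<ge> N" "n \<ge> N" for k n
  proof -
    have "2 / real (Suc k) \<le> 2 / Suc N" "2 / real (Suc n) \<le> 2 / Suc N"
      using that by (simp_all add: frac_le)
    moreover have "4 / e\<^sup>2 < real (Suc N)"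
      using N by simp
    then have "4 / real (Suc N) < e\<^sup>2"
      using \<open>e > 0\<close> by (simp add: field_simps)
    ultimately have "(dist (m k) (m n))\<^sup>2 < e\<^sup>2"
      using assms [of k n] by linarith
    then show ?thesis
      using \<open>e > 0\<close> by (simp add: power_less_imp_less_base less_imp_le)
  qed
  then show "\<exists>N. \<forall>k\<ge>N. \<forall>n\<ge>N. dist (m k) (m n) < e"
    by blast
qed

lemma nearest_point_in_closed_subspace:
  assumes M: "closed_subspace M"
  obtains p where "p \<in> M" "\<And>m. m \<in> M \<Longrightarrow> norm (x - p) \<le> norm (x - m)"
proof -
  define D where "D = (INF m\<in>M. (norm (x - m))\<^sup>2)"
  have bdd: "bdd_below ((\<lambda>m. (norm (x - m))\<^sup>2) ` M)"
    by (rule bdd_belowI [of _ 0]) auto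
  have D_le: "D \<le> (norm (x - m))\<^sup>2" if "m \<in> M" for m
    unfolding D_def using bdd that by (rule cINF_lower)
  have "\<exists>m\<in>M. (norm (x - m))\<^sup>2 < D + 1 / Suc n" for n
    using cINF_less_iff [OF _ bdd] closed_subspace_zero [OF M] unfolding D_def
    by (metis empty_iff less_add_same_cancel1 of_nat_0_less_iff zero_less_Suc
        zero_less_divide_1_iff)
  then obtain m where m_in: "\<And>n. m n \<in> M" and m_lt: "\<And>n. (norm (x - m n))\<^sup>2 < D + 1 / Suc n"
    by metis
  have "(dist (m k) (m n))\<^sup>2 \<le> 2 / Suc k + 2 / Suc n" for k n
  proof -
    have "(1/2::real) *\<^sub>R (m k + m n) \<in> M"
      using M m_in by (simp add: closed_subspace_add closed_subspace_scaleR)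
    then show ?thesis
      using dist_square_le_midpoint [OF D_le] m_lt [of k] m_lt [of n] by fastforce
  qed
  then obtain p where lim: "m \<longlonglongrightarrow> p"
    using Cauchy_if_dist_square_le Cauchy_convergent_iff convergent_def by blast
  have "p \<in> M"
    using closed_sequentially [of M m p] M m_in lim by (simp add: closed_subspace_def)
  moreover have "(norm (x - p))\<^sup>2 \<le> D"
  proof (rule tendsto_le [OF trivial_limit_sequentially])
    show "(\<lambda>n. (norm (x - m n))\<^sup>2) \<longlonglongrightarrow> (norm (x - p))\<^sup>2"
      by (intro tendsto_intros lim)
    show "(\<lambda>n. D + 1 / Suc n) \<longlonglongrightarrow> D"
      using tendsto_add [OF tendsto_const LIMSEQ_inverse_real_of_nat, of D]
      by (simp add: inverse_eq_divide)
    show "\<forall>\<^sub>F n in sequentially. (norm (x - m n))\<^sup>2 \<le> D + 1 / Suc n"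
      using m_lt by (simp add: less_imp_le)
  qed
  ultimately show ?thesis
    using that D_le by (meson norm_ge_zero order.trans power2_le_imp_le)
qed

lemma nearest_point_orth:
  assumes M: "closed_subspace M" and p: "p \<in> M"
    and nearest: "\<And>m. m \<in> M \<Longrightarrow> norm (x - p) \<le> norm (x - m)"
  shows "x - p \<in> orth M"
  unfolding orth_def
proof safe
  fix m
  assume m: "m \<in> M"
  show "cinner m (x - p) = 0"
  proof (rule ccontr)
    assume ne: "cinner m (x - p) \<noteq> 0"
    then have "m \<noteq> 0" by auto
    define t where "t = cinner m (x - p) / of_real ((norm m)\<^sup>2)"
    have "p + scaleC t m \<in> M"
      using M p m by (simp add: closed_subspace_add closed_subspace_scaleC)
    then have "(norm (x - p))\<^sup>2 \<le> (norm ((x - p) - scaleC t m))\<^sup>2"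
      using nearest by (simp add: power_mono diff_diff_eq)
    also have "\<dots> = (norm (x - p))\<^sup>2 - (cmod (cinner m (x - p)))\<^sup>2 / (norm m)\<^sup>2"
      unfolding t_def by (rule norm_square_remove_component [OF \<open>m \<noteq> 0\<close>])
    moreover have "(cmod (cinner m (x - p)))\<^sup>2 / (norm m)\<^sup>2 > 0"
      using ne \<open>m \<noteq> 0\<close> by simp
    ultimately show False
      by linarith
  qed
qed

definition proj :: "'a::chilbert_space set \<Rightarrow> 'a \<Rightarrow> 'a" where
  "proj M x = (SOME p. p \<in> M \<and> x - p \<in> orth M)"

lemma proj_in_and_orth:
  assumes "closed_subspace M"
  shows "proj M x \<in> M \<and> x - proj M x \<in> orth M"
proof -
  obtain p where "p \<in> M" "\<And>m. m \<in> M \<Longrightarrow> norm (x - p) \<le> norm (x - m)"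
    using nearest_point_in_closed_subspace [OF assms] by blast
  then have "p \<in> M \<and> x - p \<in> orth M"
    using nearest_point_orth [OF assms] by blast
  then show ?thesis
    unfolding proj_def by (rule someI)
qed

lemma proj_in: "closed_subspace M \<Longrightarrow> proj M x \<in> M"
  using proj_in_and_orth by blast

lemma proj_orth: "closed_subspace M \<Longrightarrow> x - proj M x \<in> orth M"
  using proj_in_and_orth by blast

lemma proj_unique:
  assumes M: "closed_subspace M" and "p \<in> M" and "x - p \<in> orth M"
  shows "proj M x = p"
proof -
  have "p - proj M x \<in> M"
    using assms proj_in [OF M] by (simp add: closed_subspace_diff)
  moreover have "p - proj M x = (x - proj M x) - (x - p)"
    by simp
  then have "p - proj M x \<in> orth M"
    using assms closed_subspace_orth proj_orth [OF M] by (metis closed_subspace_diff)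
  ultimately show ?thesis
    using orth_Int_eq_zero by fastforce
qed

lemma linear_proj:
  assumes M: "closed_subspace M"
  shows "linear (proj M)"
proof
  show "proj M (x + y) = proj M x + proj M y" for x y
  proof (rule proj_unique [OF M])
    have "x + y - (proj M x + proj M y) = (x - proj M x) + (y - proj M y)"
      by simp
    then show "x + y - (proj M x + proj M y) \<in> orth M"
      using closed_subspace_orth proj_orth [OF M] by (metis closed_subspace_add)
  qed (simp add: M closed_subspace_add proj_in)
  show "proj M (c *\<^sub>R x) = c *\<^sub>R proj M x" for c x
  proof (rule proj_unique [OF M])
    have "c *\<^sub>R x - c *\<^sub>R proj M x = c *\<^sub>R (x - proj M x)"
      by (simp add: scaleR_diff_right)
    then show "c *\<^sub>R x - c *\<^sub>R proj M x \<in> orth M"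
      using closed_subspace_orth proj_orth [OF M] by (metis closed_subspace_scaleR)
  qed (simp add: M closed_subspace_scaleR proj_in)
qed

lemma cinner_proj_commute:
  assumes M: "closed_subspace M"
  shows "cinner (proj M x) y = cinner x (proj M y)"
proof -
  have "cinner (proj M x) y = cinner (proj M x) (proj M y)"
    using cinner_orth_right [OF proj_in [OF M] proj_orth [OF M, of y]]
    by (metis cinner_diff_right eq_iff_diff_eq_0)
  also have "\<dots> = cinner x (proj M y)"
    using cinner_orth_left [OF proj_in [OF M] proj_orth [OF M, of x]]
    by (metis cinner_diff_left eq_iff_diff_eq_0)
  finally show ?thesis .
qed

lemma proj_commute:
  assumes M: "closed_subspace M" and A: "linear A"
    and "A ` M \<subseteq> M" and "A ` orth M \<subseteq> orth M"
  shows "proj M (A x) = A (proj M x)"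
proof (rule proj_unique [OF M])
  show "A (proj M x) \<in> M"
    using assms proj_in [OF M] by blast
  have "A x - A (proj M x) = A (x - proj M x)"
    using A by (simp add: linear_diff)
  then show "A x - A (proj M x) \<in> orth M"
    using assms proj_orth [OF M] by auto
qed

lemma proj_orth_eq:
  assumes M: "closed_subspace M"
  shows "proj (orth M) x = x - proj M x"
proof (rule proj_unique [OF closed_subspace_orth])
  show "x - proj M x \<in> orth M"
    by (rule proj_orth [OF M])
  show "x - (x - proj M x) \<in> orth (orth M)"
    using proj_in [OF M] by (auto simp: orth_def [of "orth M"] intro: cinner_orth_left)
qed

section \<open>Bounded operators, adjoints and reducing subspaces\<close>

lemma bounded_op_iff:
  "bounded_op T \<longleftrightarrow> bounded_linear T \<and> (\<forall>c x. T (scaleC c x) = scaleC c (T x))"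
proof
  assume T: "bounded_op T"
  then obtain K where K: "\<And>x. norm (T x) \<le> K * norm x"
    by (auto simp: bounded_op_def)
  have "bounded_linear T"
  proof (rule bounded_linear_intro [where K = K])
    show "T (c *\<^sub>R x) = c *\<^sub>R T x" for c x
      using T by (simp add: bounded_op_def scaleR_scaleC)
    show "norm (T x) \<le> norm x * K" for x
      using K [of x] by (simp add: mult.commute)
  qed (use T in \<open>simp add: bounded_op_def\<close>)
  then show "bounded_linear T \<and> (\<forall>c x. T (scaleC c x) = scaleC c (T x))"
    using T by (simp add: bounded_op_def)
next
  assume "bounded_linear T \<and> (\<forall>c x. T (scaleC c x) = scaleC c (T x))"
  then show "bounded_op T"
    unfolding bounded_op_def
    by (metis bounded_linear.bounded linear_add bounded_linear.linear mult.commute)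
qed

lemma norm_bounded_op_le: "bounded_op T \<Longrightarrow> norm (T x) \<le> onorm T * norm x"
  by (simp add: bounded_op_iff onorm)

lemma bounded_op_linear: "bounded_op T \<Longrightarrow> linear T"
  by (simp add: bounded_op_iff bounded_linear.linear)

lemma bounded_op_scaleC: "bounded_op T \<Longrightarrow> T (scaleC c x) = scaleC c (T x)"
  by (simp add: bounded_op_def)

lemma bounded_op_id: "bounded_op (\<lambda>x. x)"
  by (simp add: bounded_op_iff)

lemma bounded_op_comp: "bounded_op A \<Longrightarrow> bounded_op B \<Longrightarrow> bounded_op (A \<circ> B)"
  by (simp add: bounded_op_iff bounded_linear_compose o_def)

lemma bounded_op_diff: "bounded_op A \<Longrightarrow> bounded_op B \<Longrightarrow> bounded_op (\<lambda>x. A x - B x)"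
  by (simp add: bounded_op_iff bounded_linear_sub scaleC_diff_right)

lemma bounded_op_scaleR: "bounded_op A \<Longrightarrow> bounded_op (\<lambda>x. a *\<^sub>R A x)"
  by (simp add: bounded_op_iff bounded_linear_compose [OF bounded_linear_scaleR_right]
      scaleC_scaleR_commute)

lemma closed_subspace_vimage:
  assumes A: "bounded_op A" and M: "closed_subspace M"
  shows "closed_subspace (A -` M)"
proof -
  have "closed (A -` M)"
    using continuous_closed_vimage [of M A] A M
    by (simp add: bounded_op_iff closed_subspace_def linear_continuous_at)
  then show ?thesis
    using A M bounded_op_linear [OF A]
    by (simp add: closed_subspace_def bounded_op_scaleC linear_0 linear_add)
qed

lemma riesz_representation:
  fixes f :: "'a::chilbert_space \<Rightarrow> complex"
  assumes add: "\<And>x y. f (x + y) = f x + f y" and scale: "\<And>c x. f (scaleC c x) = c * f x"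
    and bounded: "\<And>x. cmod (f x) \<le> K * norm x"
  shows "\<exists>z. \<forall>x. f x = cinner z x"
proof (cases "\<forall>x. f x = 0")
  case True
  then show ?thesis
    by (metis cinner_zero_left)
next
  case False
  then obtain x0 where x0: "f x0 \<noteq> 0"
    by auto
  have lin: "bounded_linear f"
  proof (rule bounded_linear_intro [where K = K])
    show "f (r *\<^sub>R x) = r *\<^sub>R f x" for r x
      using scale [of "of_real r" x] by (simp add: scaleR_scaleC scaleR_conv_of_real)
    show "norm (f x) \<le> norm x * K" for x
      using bounded [of x] by (simp add: mult.commute)
  qed (rule add)
  define N where "N = f -` {0}"
  have N: "closed_subspace N"
    unfolding closed_subspace_def N_def
  proof (intro conjI ballI allI)
    show "closed (f -` {0})"
      by (intro continuous_closed_vimage closed_singleton linear_continuous_at lin)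
  qed (auto simp: add scale lin linear_0 bounded_linear.linear)
  \<comment> \<open>a nonzero vector orthogonal to the kernel spans the representing direction\<close>
  define u where "u = x0 - proj N x0"
  have u: "u \<in> orth N"
    unfolding u_def by (rule proj_orth [OF N])
  have fu: "f u = f x0"
    using proj_in [OF N, of x0] linear_diff [OF bounded_linear.linear [OF lin]]
    by (simp add: u_def N_def)
  then have "cinner u u \<noteq> 0"
    using x0 cinner_self_eq_zero lin linear_0 bounded_linear.linear by metis
  moreover have "f x * cinner u u = f u * cinner u x" for x
  proof -
    have "scaleC (f x) u - scaleC (f u) x \<in> N"
      using linear_diff [OF bounded_linear.linear [OF lin]] by (simp add: N_def scale)
    then have "cinner (scaleC (f x) u - scaleC (f u) x) u = 0"
      using u by (rule cinner_orth_right)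
    then have "cnj (f x) * cinner u u = cnj (f u) * cinner x u"
      by (simp add: cinner_diff_left cinner_scaleC_left)
    then show ?thesis
      by (metis cinner_commute complex_cnj_cnj complex_cnj_mult)
  qed
  ultimately have "f x = cinner (scaleC (cnj (f u / cinner u u)) u) x" for x
    by (simp add: cinner_scaleC_left field_simps)
  then show ?thesis
    by blast
qed

lemma adjoint_exists:
  assumes T: "bounded_op T"
  shows "\<exists>S. \<forall>x y. cinner (T x) y = cinner x (S y)"
proof -
  have "\<exists>z. \<forall>x. cinner y (T x) = cinner z x" for y
  proof (rule riesz_representation [where K = "norm y * onorm T"])
    show "cinner y (T (x + x')) = cinner y (T x) + cinner y (T x')" for x x'
      using T by (simp add: bounded_op_def cinner_add_right)
    show "cinner y (T (scaleC c x)) = c * cinner y (T x)" for c x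
      using T by (simp add: bounded_op_def cinner_scaleC_right)
    show "cmod (cinner y (T x)) \<le> norm y * onorm T * norm x" for x
      using cinner_cauchy_schwarz [of y "T x"] norm_bounded_op_le [OF T, of x]
      by (metis mult.assoc mult_left_mono norm_ge_zero order_trans)
  qed
  then obtain S where "\<And>y x. cinner y (T x) = cinner (S y) x"
    by metis
  then have "\<forall>x y. cinner (T x) y = cinner x (S y)"
    by (metis cinner_commute)
  then show ?thesis
    by blast
qed

lemma cinner_adj_right: "bounded_op T \<Longrightarrow> cinner (T x) y = cinner x (adj T y)"
  unfolding adj_def using someI_ex [OF adjoint_exists] by blast

lemma cinner_adj_left: "bounded_op T \<Longrightarrow> cinner (adj T y) x = cinner y (T x)"
  by (metis cinner_adj_right cinner_commute)

lemma adj_unique: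
  assumes "bounded_op T" and "\<And>x y. cinner (T x) y = cinner x (S y)"
  shows "adj T = S"
  using assms cinner_adj_right by (metis cinner_ext_right ext)

lemma bounded_op_adj:
  assumes T: "bounded_op T"
  shows "bounded_op (adj T)"
proof -
  have "onorm T \<ge> 0"
    using T by (simp add: bounded_op_iff onorm_pos_le)
  have "adj T (x + y) = adj T x + adj T y" for x y
    by (rule cinner_ext_right) (simp add: cinner_adj_right [OF T, symmetric] cinner_add_right)
  moreover have "adj T (scaleC c x) = scaleC c (adj T x)" for c x
    by (rule cinner_ext_right) (simp add: cinner_adj_right [OF T, symmetric] cinner_scaleC_right)
  moreover have "norm (adj T y) \<le> onorm T * norm y" for y
  proof -
    have "(norm (adj T y))\<^sup>2 = Re (cinner (T (adj T y)) y)"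
      by (simp add: norm_square_eq_Re_cinner cinner_adj_right [OF T])
    also have "\<dots> \<le> norm (T (adj T y)) * norm y"
      using complex_Re_le_cmod cinner_cauchy_schwarz order_trans by blast
    also have "\<dots> \<le> onorm T * norm (adj T y) * norm y"
      using norm_bounded_op_le [OF T] by (simp add: mult_right_mono)
    finally have "norm (adj T y) * norm (adj T y) \<le> norm (adj T y) * (onorm T * norm y)"
      by (simp add: power2_eq_square mult_ac)
    then show ?thesis
      using \<open>onorm T \<ge> 0\<close> by (cases "adj T y = 0") auto
  qed
  ultimately show ?thesis
    unfolding bounded_op_def by blast
qed

lemma adj_comp:
  assumes "bounded_op A" and "bounded_op B"
  shows "adj (A \<circ> B) = adj B \<circ> adj A"
  by (rule adj_unique [OF bounded_op_comp [OF assms]]) (simp add: assms cinner_adj_right)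

lemma adjoint_invariant_orth:
  assumes "\<And>x y. cinner (A x) y = cinner x (B y)" and "A ` M \<subseteq> M"
  shows "B ` orth M \<subseteq> orth M"
proof (unfold orth_def, safe)
  fix x y
  assume y: "\<forall>m\<in>M. cinner m y = 0" and "x \<in> M"
  then have "cinner (A x) y = 0"
    using assms(2) by blast
  then show "cinner x (B y) = 0"
    by (simp add: assms(1))
qed

lemma reduces_in_UNIV_iff:
  assumes T: "bounded_op T"
  shows "reduces_in UNIV M T \<longleftrightarrow> closed_subspace M \<and> T ` M \<subseteq> M \<and> adj T ` M \<subseteq> M"
proof
  assume R: "reduces_in UNIV M T"
  then have M: "closed_subspace M" and TM: "T ` M \<subseteq> M"
    by (simp_all add: reduces_in_def)
  have "adj T y \<in> M" if y: "y \<in> M" for y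
  proof -
    define q where "q = adj T y - proj M (adj T y)"
    have q: "q \<in> orth M"
      unfolding q_def by (rule proj_orth [OF M])
    then have "T q \<in> orth M"
      using R by (auto simp: reduces_in_def)
    then have "cinner q (adj T y) = 0"
      using y by (simp add: cinner_adj_right [OF T, symmetric] cinner_orth_left)
    moreover have "cinner q (proj M (adj T y)) = 0"
      using proj_in [OF M] q by (rule cinner_orth_left)
    ultimately have "cinner q q = 0"
      by (simp add: q_def cinner_diff_right)
    then have "q = 0"
      by (simp add: cinner_self_eq_zero)
    then show ?thesis
      using proj_in [OF M, of "adj T y"] by (simp add: q_def)
  qed
  then show "closed_subspace M \<and> T ` M \<subseteq> M \<and> adj T ` M \<subseteq> M"
    using M TM by blast
next
  assume "closed_subspace M \<and> T ` M \<subseteq> M \<and> adj T ` M \<subseteq> M"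
  moreover have "T ` orth M \<subseteq> orth M" if "adj T ` M \<subseteq> M"
    using adjoint_invariant_orth [OF cinner_adj_left [OF T] that] .
  ultimately show "reduces_in UNIV M T"
    by (simp add: reduces_in_def)
qed

lemma reduces_in_UNIV_if_reduces_in:
  assumes T: "bounded_op T" and R: "reduces_in H N T" and H: "closed_subspace H"
    and adj_H: "adj T ` H \<subseteq> H"
  shows "reduces_in UNIV N T"
proof -
  have N: "closed_subspace N" and "N \<subseteq> H" and "T ` N \<subseteq> N"
    and T_orth: "T ` (H \<inter> orth N) \<subseteq> H \<inter> orth N"
    using R by (auto simp: reduces_in_def)
  have "T x \<in> orth N" if x: "x \<in> orth N" for x
  proof -
    \<comment> \<open>the component of \<open>x\<close> in \<open>H\<close> stays in \<open>orth N\<close> by assumption, the one in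
      \<open>orth H\<close> because \<open>T\<close> preserves \<open>orth H\<close>\<close>
    define p where "p = proj H x"
    have q: "x - p \<in> orth H"
      unfolding p_def by (rule proj_orth [OF H])
    have "p \<in> orth N"
    proof (unfold orth_def, safe)
      fix n
      assume "n \<in> N"
      then have "cinner n x = 0" "cinner n (x - p) = 0"
        using x q \<open>N \<subseteq> H\<close> by (auto simp: orth_def)
      then show "cinner n p = 0"
        by (simp add: cinner_diff_right)
    qed
    then have "T p \<in> orth N"
      using T_orth proj_in [OF H] by (auto simp: p_def)
    moreover have "T (x - p) \<in> orth N"
      using adjoint_invariant_orth [OF cinner_adj_left [OF T] adj_H] q \<open>N \<subseteq> H\<close>
      by (auto simp: orth_def)
    ultimately have "T p + T (x - p) \<in> orth N"
      by (simp add: closed_subspace_orth closed_subspace_add)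
    then show ?thesis
      by (simp add: linear_add [OF bounded_op_linear [OF T], symmetric])
  qed
  then show ?thesis
    using N \<open>T ` N \<subseteq> N\<close> by (auto simp: reduces_in_def)
qed

section \<open>The \<open>\<C>_{1,r}\<close> part of a single operator\<close>

lemma reducing_preimage:
  assumes T: "bounded_op T" and "inj T" and R: "reduces_in UNIV N T" and "T x \<in> N"
  shows "x \<in> N"
proof -
  have N: "closed_subspace N" and "T ` N \<subseteq> N" and T_orth: "T ` orth N \<subseteq> orth N"
    using R by (auto simp: reduces_in_def)
  \<comment> \<open>the component of \<open>x\<close> in \<open>orth N\<close> is mapped into \<open>N \<inter> orth N = {0}\<close>\<close>
  define q where "q = x - proj N x"
  have "T q = T x - T (proj N x)"
    by (simp add: q_def linear_diff [OF bounded_op_linear [OF T]])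
  moreover have "T (proj N x) \<in> N"
    using \<open>T ` N \<subseteq> N\<close> proj_in [OF N] by blast
  ultimately have "T q \<in> N"
    using \<open>T x \<in> N\<close> closed_subspace_diff [OF N] by simp
  moreover have "T q \<in> orth N"
    using T_orth proj_orth [OF N] q_def by blast
  ultimately have "T q = 0"
    using orth_Int_eq_zero by blast
  then have "q = 0"
    using \<open>inj T\<close> linear_0 [OF bounded_op_linear [OF T]] by (metis injD)
  then show ?thesis
    using proj_in [OF N, of x] by (simp add: q_def)
qed

lemma C1r_restrict:
  assumes T: "bounded_op T" and C: "C1r UNIV r T" and R: "reduces_in UNIV N T"
  shows "C1r N r T"
proof -
  have "bij T" and contr: "\<And>x. norm (T x) \<le> norm x"
    and inv_bound: "\<And>y. norm (r *\<^sub>R the_inv_into UNIV T y) \<le> norm y"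
    using C by (auto simp: C1r_def)
  then have "inj T"
    by (simp add: bij_is_inj)
  have "T ` N = N"
  proof
    show "T ` N \<subseteq> N"
      using R by (simp add: reduces_in_def)
    show "N \<subseteq> T ` N"
    proof
      fix y
      assume "y \<in> N"
      obtain x where "y = T x"
        using \<open>bij T\<close> by (meson bij_pointE)
      then show "y \<in> T ` N"
        using \<open>y \<in> N\<close> reducing_preimage [OF T \<open>inj T\<close> R] by blast
    qed
  qed
  have inj_N: "inj_on T N"
    using \<open>inj T\<close> by (rule inj_on_subset) simp
  then have bij_N: "bij_betw T N N"
    using \<open>T ` N = N\<close> by (simp add: bij_betw_def)
  have "the_inv_into N T y = the_inv_into UNIV T y" if "y \<in> N" for y
  proof -
    have "y \<in> T ` N"
      using \<open>y \<in> N\<close> \<open>T ` N = N\<close> by (simp only:)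
    then obtain x where "x \<in> N" "T x = y"
      by (rule imageE) simp
    then have "the_inv_into N T y = x"
      by (intro the_inv_into_f_eq [OF inj_N])
    moreover have "the_inv_into UNIV T y = x"
      using \<open>T x = y\<close> by (intro the_inv_into_f_eq [OF \<open>inj T\<close>]) simp_all
    ultimately show ?thesis
      by simp
  qed
  then show ?thesis
    using bij_N contr inv_bound by (simp add: C1r_def)
qed

definition gram :: "('a::chilbert_space \<Rightarrow> 'a) \<Rightarrow> 'a \<Rightarrow> 'a" where
  "gram T x = adj T (T x)"

text \<open>The kernel of \<open>(T\<^sup>*T - I)(T\<^sup>*T - r\<^sup>2 I)\<close>, on which \<open>T\<^sup>*T\<close> is of the form
  \<open>P0 + r\<^sup>2 P1\<close>.\<close>
definition gram_kernel :: "real \<Rightarrow> ('a::chilbert_space \<Rightarrow> 'a) \<Rightarrow> 'a set" where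
  "gram_kernel r T = {x. gram T (gram T x - r\<^sup>2 *\<^sub>R x) = gram T x - r\<^sup>2 *\<^sub>R x}"

fun adj_word :: "('a::chilbert_space \<Rightarrow> 'a) \<Rightarrow> bool list \<Rightarrow> 'a \<Rightarrow> 'a" where
  "adj_word T [] x = x"
| "adj_word T (b # bs) x = (if b then T else adj T) (adj_word T bs x)"

definition Cscr1r_part :: "real \<Rightarrow> ('a::chilbert_space \<Rightarrow> 'a) \<Rightarrow> 'a set" where
  "Cscr1r_part r T = {x. \<forall>bs. adj_word T bs x \<in> gram_kernel r T}"

lemma bounded_op_gram:
  assumes "bounded_op T"
  shows "bounded_op (gram T)"
proof -
  have "gram T = adj T \<circ> T"
    by (simp add: fun_eq_iff gram_def)
  then show ?thesis
    using bounded_op_comp [OF bounded_op_adj assms] assms by simp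
qed

lemma cinner_gram_commute: "bounded_op T \<Longrightarrow> cinner (gram T x) y = cinner x (gram T y)"
  by (simp add: gram_def cinner_adj_left cinner_adj_right)

lemma closed_subspace_gram_kernel:
  assumes T: "bounded_op T"
  shows "closed_subspace (gram_kernel r T)"
proof -
  have Q: "bounded_op (\<lambda>x. gram T x - r\<^sup>2 *\<^sub>R x)"
    by (intro bounded_op_diff bounded_op_gram bounded_op_scaleR bounded_op_id T)
  have "bounded_op (\<lambda>x. gram T (gram T x - r\<^sup>2 *\<^sub>R x) - (gram T x - r\<^sup>2 *\<^sub>R x))"
    using bounded_op_diff [OF bounded_op_comp [OF bounded_op_gram [OF T] Q] Q] by (simp add: o_def)
  then have "closed_subspace ((\<lambda>x. gram T (gram T x - r\<^sup>2 *\<^sub>R x) - (gram T x - r\<^sup>2 *\<^sub>R x)) -` {0})"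
    by (rule closed_subspace_vimage) (simp add: closed_subspace_def)
  moreover have
    "(\<lambda>x. gram T (gram T x - r\<^sup>2 *\<^sub>R x) - (gram T x - r\<^sup>2 *\<^sub>R x)) -` {0} = gram_kernel r T"
    by (simp add: gram_kernel_def vimage_def)
  ultimately show ?thesis
    by simp
qed

lemma bounded_op_adj_word: "bounded_op T \<Longrightarrow> bounded_op (adj_word T bs)"
proof (induction bs)
  case Nil
  then show ?case
    using bounded_op_id by (simp add: fun_eq_iff)
next
  case (Cons b bs)
  then have "bounded_op ((if b then T else adj T) \<circ> adj_word T bs)"
    by (simp add: bounded_op_comp bounded_op_adj)
  then show ?case
    by (simp add: o_def)
qed

lemma closed_subspace_Cscr1r_part:
  assumes T: "bounded_op T"
  shows "closed_subspace (Cscr1r_part r T)"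
proof -
  have "Cscr1r_part r T = (\<Inter>bs. adj_word T bs -` gram_kernel r T)"
    by (auto simp: Cscr1r_part_def)
  then show ?thesis
    by (simp only:) (intro closed_subspace_INT closed_subspace_vimage bounded_op_adj_word
        closed_subspace_gram_kernel T)
qed

lemma Cscr1r_part_subset_gram_kernel: "Cscr1r_part r T \<subseteq> gram_kernel r T"
  unfolding Cscr1r_part_def by (auto dest: spec [of _ "[]"])

lemma adj_word_snoc: "adj_word T (bs @ [b]) x = adj_word T bs ((if b then T else adj T) x)"
  by (induction bs) auto

lemma Cscr1r_part_invariant:
  assumes "x \<in> Cscr1r_part r T"
  shows "T x \<in> Cscr1r_part r T" and "adj T x \<in> Cscr1r_part r T"
proof -
  have word: "adj_word T (bs @ [b]) x \<in> gram_kernel r T" for bs b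
    using assms by (simp only: Cscr1r_part_def mem_Collect_eq)
  show "T x \<in> Cscr1r_part r T"
    using word [of _ True] by (simp add: Cscr1r_part_def adj_word_snoc)
  show "adj T x \<in> Cscr1r_part r T"
    using word [of _ False] by (simp add: Cscr1r_part_def adj_word_snoc)
qed

lemma Cscr1r_part_greatest:
  assumes "T ` M \<subseteq> M" and "adj T ` M \<subseteq> M" and "M \<subseteq> gram_kernel r T"
  shows "M \<subseteq> Cscr1r_part r T"
proof
  fix x
  assume "x \<in> M"
  then have "adj_word T bs x \<in> M" for bs
    using assms by (induction bs) auto
  then show "x \<in> Cscr1r_part r T"
    using assms by (auto simp: Cscr1r_part_def)
qed

lemma Cscr1r_part_commuting_invariant:
  assumes A: "linear A" and "\<And>x. A (T x) = T (A x)" and "\<And>x. A (adj T x) = adj T (A x)"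
    and x: "x \<in> Cscr1r_part r T"
  shows "A x \<in> Cscr1r_part r T"
proof -
  have gram: "A (gram T y) = gram T (A y)" for y
    by (simp add: gram_def assms)
  have kernel: "A y \<in> gram_kernel r T" if "y \<in> gram_kernel r T" for y
  proof -
    have "A (gram T (gram T y - r\<^sup>2 *\<^sub>R y)) = A (gram T y - r\<^sup>2 *\<^sub>R y)"
      using that by (simp add: gram_kernel_def)
    then show ?thesis
      by (simp add: gram_kernel_def gram linear_diff [OF A] linear_scale [OF A])
  qed
  have word: "A (adj_word T bs y) = adj_word T bs (A y)" for bs y
    by (induction bs) (simp_all add: assms)
  have "adj_word T bs (A x) \<in> gram_kernel r T" for bs
    using kernel [of "adj_word T bs x"] x by (simp add: Cscr1r_part_def word)
  then show ?thesis
    by (simp add: Cscr1r_part_def)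
qed

text \<open>The projection \<open>P0\<close> of a \<open>\<C>_{1,r}\<close> operator, read off from
  \<open>T\<^sup>*T = P0 + r\<^sup>2 (I - P0)\<close>.\<close>
definition gram_proj :: "real \<Rightarrow> ('a::chilbert_space \<Rightarrow> 'a) \<Rightarrow> 'a \<Rightarrow> 'a" where
  "gram_proj r T x = (1 / (1 - r\<^sup>2)) *\<^sub>R (gram T x - r\<^sup>2 *\<^sub>R x)"

lemma gram_eq_gram_proj:
  assumes "r\<^sup>2 \<noteq> 1"
  shows "gram T x = gram_proj r T x + r\<^sup>2 *\<^sub>R (x - gram_proj r T x)"
proof -
  define c where "c = 1 / (1 - r\<^sup>2)"
  have "gram_proj r T x + r\<^sup>2 *\<^sub>R (x - gram_proj r T x)
      = (c * (1 - r\<^sup>2)) *\<^sub>R (gram T x - r\<^sup>2 *\<^sub>R x) + r\<^sup>2 *\<^sub>R x"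
    by (simp add: gram_proj_def c_def [symmetric] algebra_simps)
  then show ?thesis
    using assms by (simp add: c_def)
qed

lemma linear_gram_proj:
  assumes "bounded_op T"
  shows "linear (gram_proj r T)"
proof -
  have "linear (gram T)"
    by (rule bounded_op_linear [OF bounded_op_gram [OF assms]])
  then show ?thesis
    unfolding gram_proj_def by (auto intro!: linearI simp: linear_add linear_scale algebra_simps)
qed

lemma orth_proj_on_gram_proj:
  assumes T: "bounded_op T" and r: "r\<^sup>2 \<noteq> 1" and N: "closed_subspace N"
    and gram_N: "gram T ` N \<subseteq> N" and kernel: "N \<subseteq> gram_kernel r T"
  shows "orth_proj_on N (gram_proj r T)"
  unfolding orth_proj_on_def image_subset_iff
proof (intro conjI ballI)
  show "gram_proj r T x \<in> N" if "x \<in> N" for x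
    using that gram_N N by (auto simp: gram_proj_def closed_subspace_scaleR closed_subspace_diff)
  show "gram_proj r T (gram_proj r T x) = gram_proj r T x" if "x \<in> N" for x
  proof -
    define c where "c = 1 / (1 - r\<^sup>2)"
    \<comment> \<open>on \<open>gram_kernel r T\<close>, \<open>T\<^sup>*T\<close> fixes the range of \<open>P0\<close>\<close>
    have "gram T (gram_proj r T x) = gram_proj r T x"
      using kernel that
      by (auto simp: gram_proj_def gram_kernel_def
          linear_scale [OF bounded_op_linear [OF bounded_op_gram [OF T]]])
    then have "gram_proj r T (gram_proj r T x) = (c * (1 - r\<^sup>2)) *\<^sub>R gram_proj r T x"
      by (simp add: gram_proj_def [of r T "gram_proj r T x"] c_def [symmetric] algebra_simps)
    then show ?thesis
      using r by (simp add: c_def)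
  qed
  show "cinner (gram_proj r T x) y = cinner x (gram_proj r T y)" for x y
    by (simp add: gram_proj_def cinner_scaleR_left cinner_scaleR_right cinner_diff_left
        cinner_diff_right cinner_gram_commute [OF T])
qed

lemma orth_proj_on_complement:
  assumes P_lin: "linear P" and N: "closed_subspace N" and P: "orth_proj_on N P"
  shows "orth_proj_on N (\<lambda>x. x - P x)"
  unfolding orth_proj_on_def image_subset_iff
proof (intro conjI ballI)
  show "x - P x \<in> N" if "x \<in> N" for x
    using P that by (auto simp: orth_proj_on_def closed_subspace_diff [OF N])
  show "x - P x - P (x - P x) = x - P x" if "x \<in> N" for x
    using P that by (simp add: orth_proj_on_def linear_diff [OF P_lin])
  show "cinner (x - P x) y = cinner x (y - P y)" if "x \<in> N" "y \<in> N" for x y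
    using P that by (simp add: orth_proj_on_def cinner_diff_left cinner_diff_right)
qed

lemma Cscr1r_if_subset_gram_kernel:
  assumes T: "bounded_op T" and r: "r\<^sup>2 \<noteq> 1" and R: "reduces_in UNIV N T"
    and kernel: "N \<subseteq> gram_kernel r T"
  shows "Cscr1r N r T"
proof -
  have N: "closed_subspace N" and "T ` N \<subseteq> N" and adj_N: "adj T ` N \<subseteq> N"
    using R by (simp_all add: reduces_in_UNIV_iff [OF T])
  then have "gram T ` N \<subseteq> N"
    by (auto simp: gram_def)
  then have P0: "orth_proj_on N (gram_proj r T)"
    using orth_proj_on_gram_proj [OF T r N _ kernel] by blast
  moreover have "orth_proj_on N (\<lambda>x. x - gram_proj r T x)"
    by (rule orth_proj_on_complement [OF linear_gram_proj [OF T] N P0])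
  moreover have "adjoint_on N T (adj T)"
    unfolding adjoint_on_def using adj_N cinner_adj_right [OF T] by blast
  moreover have "\<forall>x\<in>N. adj T (T x) = gram_proj r T x + r\<^sup>2 *\<^sub>R (x - gram_proj r T x)"
    using gram_eq_gram_proj [OF r, of T] by (simp add: gram_def)
  ultimately show ?thesis
    unfolding Cscr1r_def by force
qed

lemma adjoint_on_eq_adj:
  assumes T: "bounded_op T" and N: "closed_subspace N" and adj_N: "adj T ` N \<subseteq> N"
    and S: "adjoint_on N T S" and "y \<in> N"
  shows "S y = adj T y"
proof -
  define z where "z = S y - adj T y"
  have "S y \<in> N" "adj T y \<in> N"
    using S adj_N \<open>y \<in> N\<close> by (auto simp: adjoint_on_def)
  then have "z \<in> N"
    unfolding z_def by (rule closed_subspace_diff [OF N])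
  then have "cinner z (S y) = cinner z (adj T y)"
    using S \<open>y \<in> N\<close> by (simp add: adjoint_on_def cinner_adj_right [OF T, symmetric])
  then have "cinner z z = 0"
    by (simp add: z_def cinner_diff_right)
  then show ?thesis
    by (simp add: z_def cinner_self_eq_zero)
qed

lemma gram_kernel_if_Cscr1r:
  assumes T: "bounded_op T" and R: "reduces_in UNIV N T" and C: "Cscr1r N r T"
  shows "N \<subseteq> gram_kernel r T"
proof
  fix x
  assume x: "x \<in> N"
  have N: "closed_subspace N" and "T ` N \<subseteq> N" and adj_N: "adj T ` N \<subseteq> N"
    using R by (simp_all add: reduces_in_UNIV_iff [OF T])
  obtain P0 P1 S where P0: "orth_proj_on N P0" and sum: "\<forall>x\<in>N. P0 x + P1 x = x"
    and S: "adjoint_on N T S" and SJ: "\<forall>x\<in>N. S (T x) = P0 x + r\<^sup>2 *\<^sub>R P1 x"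
    using C unfolding Cscr1r_def by blast
  have gram_eq: "gram T y = P0 y + r\<^sup>2 *\<^sub>R (y - P0 y)" if "y \<in> N" for y
  proof -
    have "T y \<in> N"
      using \<open>T ` N \<subseteq> N\<close> that by blast
    then have "gram T y = S (T y)"
      by (simp add: gram_def adjoint_on_eq_adj [OF T N adj_N S])
    also have "\<dots> = P0 y + r\<^sup>2 *\<^sub>R P1 y"
      using SJ that by blast
    also have "P1 y = y - P0 y"
      using sum that by (metis add_diff_cancel_left')
    finally show ?thesis .
  qed
  define p where "p = P0 x"
  have "p \<in> N" and "P0 p = p"
    using P0 x by (auto simp: orth_proj_on_def p_def)
  then have "gram T p = p"
    using gram_eq by simp
  moreover have "gram T x - r\<^sup>2 *\<^sub>R x = (1 - r\<^sup>2) *\<^sub>R p"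
    using gram_eq [OF x] by (simp add: p_def algebra_simps)
  ultimately show "x \<in> gram_kernel r T"
    by (simp add: gram_kernel_def linear_scale [OF bounded_op_linear [OF bounded_op_gram [OF T]]])
qed

lemma reducing_Cscr1r_subset_Cscr1r_part:
  assumes T: "bounded_op T" and R: "reduces_in UNIV M T" and C: "Cscr1r M r T"
  shows "M \<subseteq> Cscr1r_part r T"
proof (rule Cscr1r_part_greatest)
  show "T ` M \<subseteq> M" and "adj T ` M \<subseteq> M"
    using R by (simp_all add: reduces_in_UNIV_iff [OF T])
  show "M \<subseteq> gram_kernel r T"
    by (rule gram_kernel_if_Cscr1r [OF T R C])
qed

lemma reducing_cnu_subset_orth_Cscr1r_part:
  assumes T: "bounded_op T" and r: "r\<^sup>2 \<noteq> 1" and R: "reduces_in UNIV M T" and C: "cnu M r T"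
  shows "M \<subseteq> orth (Cscr1r_part r T)"
proof -
  have M: "closed_subspace M" and T_M: "T ` M \<subseteq> M" and adj_M: "adj T ` M \<subseteq> M"
    using R by (simp_all add: reduces_in_UNIV_iff [OF T])
  define N where "N = M \<inter> Cscr1r_part r T"
  have N: "reduces_in UNIV N T"
    using M T_M adj_M Cscr1r_part_invariant closed_subspace_Cscr1r_part [OF T]
    by (auto simp: N_def reduces_in_UNIV_iff [OF T] intro!: closed_subspace_Int)
  have "Cscr1r N r T"
    using Cscr1r_part_subset_gram_kernel
    by (intro Cscr1r_if_subset_gram_kernel [OF T r N]) (auto simp: N_def)
  moreover have "reduces_in M N T"
    using N T_M by (auto simp: reduces_in_def N_def)
  ultimately have N_zero: "N = {0}"
    using C unfolding cnu_def by blast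
  \<comment> \<open>the projection onto \<open>M\<close> commutes with \<open>T\<close> and \<open>T\<^sup>*\<close>, so it maps \<open>Cscr1r_part r T\<close> into \<open>N\<close>\<close>
  have "proj M (T x) = T (proj M x)" for x
    using R by (intro proj_commute [OF M bounded_op_linear [OF T] T_M]) (simp add: reduces_in_def)
  moreover have "proj M (adj T x) = adj T (proj M x)" for x
    by (intro proj_commute [OF M bounded_op_linear [OF bounded_op_adj [OF T]] adj_M]
        adjoint_invariant_orth [OF cinner_adj_right [OF T] T_M])
  ultimately have "proj M y \<in> N" if "y \<in> Cscr1r_part r T" for y
    using Cscr1r_part_commuting_invariant [OF linear_proj [OF M]] that proj_in [OF M]
    by (simp add: N_def)
  then have "y \<in> orth M" if "y \<in> Cscr1r_part r T" for y
    using proj_orth [OF M, of y] that N_zero by simp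
  then show ?thesis
    by (auto simp: orth_def [of "Cscr1r_part r T"] intro: cinner_orth_left)
qed

fun type_part :: "real \<Rightarrow> ('a::chilbert_space \<Rightarrow> 'a) \<Rightarrow> optype \<Rightarrow> 'a set" where
  "type_part r T t1 = Cscr1r_part r T"
| "type_part r T t2 = orth (Cscr1r_part r T)"

lemma closed_subspace_type_part: "bounded_op T \<Longrightarrow> closed_subspace (type_part r T t)"
  by (cases t) (simp_all add: closed_subspace_Cscr1r_part closed_subspace_orth)

lemma has_type_iff_subset_type_part:
  assumes T: "bounded_op T" and C: "C1r UNIV r T" and r: "r\<^sup>2 \<noteq> 1" and R: "reduces_in UNIV M T"
  shows "has_type M r T t \<longleftrightarrow> M \<subseteq> type_part r T t"
proof (cases t)
  case t1
  have "Cscr1r M r T" if "M \<subseteq> Cscr1r_part r T"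
    using that Cscr1r_part_subset_gram_kernel
    by (intro Cscr1r_if_subset_gram_kernel [OF T r R]) blast
  then show ?thesis
    using t1 C1r_restrict [OF T C R] reducing_Cscr1r_subset_Cscr1r_part [OF T R] by auto
next
  case t2
  have "\<not> (\<exists>M'. M' \<noteq> {0} \<and> reduces_in M M' T \<and> Cscr1r M' r T)"
    if M_orth: "M \<subseteq> orth (Cscr1r_part r T)"
  proof clarify
    fix M'
    assume "M' \<noteq> {0}" and R': "reduces_in M M' T" and "Cscr1r M' r T"
    have M: "closed_subspace M" and "adj T ` M \<subseteq> M"
      using R by (simp_all add: reduces_in_UNIV_iff [OF T])
    then have "reduces_in UNIV M' T"
      by (intro reduces_in_UNIV_if_reduces_in [OF T R'])
    then have "M' \<subseteq> Cscr1r_part r T"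
      using reducing_Cscr1r_subset_Cscr1r_part [OF T] \<open>Cscr1r M' r T\<close> by blast
    moreover have "M' \<subseteq> orth (Cscr1r_part r T)"
      using R' M_orth by (auto simp: reduces_in_def)
    ultimately have "M' \<subseteq> {0}"
      using orth_Int_eq_zero by blast
    moreover have "0 \<in> M'"
      using R' by (simp add: reduces_in_def closed_subspace_zero)
    ultimately show False
      using \<open>M' \<noteq> {0}\<close> by blast
  qed
  then show ?thesis
    using t2 C1r_restrict [OF T C R] reducing_cnu_subset_orth_Cscr1r_part [OF T r R]
    by (auto simp: cnu_def)
qed

lemma type_part_invariant:
  assumes "\<And>x y. cinner (B x) y = cinner x (A y)"
    and "A ` Cscr1r_part r S \<subseteq> Cscr1r_part r S" and "B ` Cscr1r_part r S \<subseteq> Cscr1r_part r S"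
  shows "A ` type_part r S t \<subseteq> type_part r S t"
  using assms adjoint_invariant_orth [of B A] by (cases t) simp_all

lemma UNIV_optype: "(UNIV :: optype set) = {t1, t2}"
  using optype.exhaust by auto

lemma sum_proj_type_part:
  assumes "bounded_op S"
  shows "(\<Sum>t\<in>UNIV. proj (type_part r S t) x) = x"
  by (simp add: UNIV_optype proj_orth_eq closed_subspace_Cscr1r_part [OF assms])

section \<open>Joint parts of a doubly commuting tuple\<close>

lemma sum_PiE_insert:
  assumes "a \<notin> J"
  shows "(\<Sum>g\<in>PiE (insert a J) B. F g) = (\<Sum>g\<in>PiE J B. \<Sum>y\<in>B a. F (g(a := y)))"
proof -
  have "(\<Sum>g\<in>PiE (insert a J) B. F g) = (\<Sum>(y, g)\<in>B a \<times> PiE J B. F (g(a := y)))"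
    using assms
    by (intro sum.reindex_bij_witness [of _ "\<lambda>(y, g). g(a := y)" "\<lambda>g. (g a, g(a := undefined))"])
      (auto simp: PiE_def extensional_def)
  also have "\<dots> = (\<Sum>y\<in>B a. \<Sum>g\<in>PiE J B. F (g(a := y)))"
    by (simp add: sum.cartesian_product)
  also have "\<dots> = (\<Sum>g\<in>PiE J B. \<Sum>y\<in>B a. F (g(a := y)))"
    by (rule sum.swap)
  finally show ?thesis .
qed

locale doubly_commuting_tuple =
  fixes d :: nat and T :: "nat \<Rightarrow> 'a::chilbert_space \<Rightarrow> 'a"
  assumes bounded: "\<And>i. i \<in> {1..d} \<Longrightarrow> bounded_op (T i)"
    and doubly_commuting: "doubly_commuting d T"
begin

lemma T_commute: "i \<in> {1..d} \<Longrightarrow> j \<in> {1..d} \<Longrightarrow> T i (T j x) = T j (T i x)"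
  using doubly_commuting unfolding doubly_commuting_def by (metis comp_apply)

lemma T_adj_commute:
  "i \<in> {1..d} \<Longrightarrow> j \<in> {1..d} \<Longrightarrow> i \<noteq> j \<Longrightarrow> T i (adj (T j) x) = adj (T j) (T i x)"
  using doubly_commuting unfolding doubly_commuting_def by (metis comp_apply)

lemma adj_adj_commute:
  assumes i: "i \<in> {1..d}" and j: "j \<in> {1..d}"
  shows "adj (T i) (adj (T j) x) = adj (T j) (adj (T i) x)"
proof -
  have "T j \<circ> T i = T i \<circ> T j"
    using T_commute [OF i j] by (auto simp: fun_eq_iff)
  then have "adj (T j \<circ> T i) = adj (T i \<circ> T j)"
    by simp
  then have "adj (T i) \<circ> adj (T j) = adj (T j) \<circ> adj (T i)"
    by (simp only: adj_comp [OF bounded [OF j] bounded [OF i]]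
        adj_comp [OF bounded [OF i] bounded [OF j]])
  then show ?thesis
    by (simp add: fun_eq_iff)
qed

lemma Cscr1r_part_T_invariant:
  assumes i: "i \<in> {1..d}" and j: "j \<in> {1..d}" and x: "x \<in> Cscr1r_part r (T j)"
  shows "T i x \<in> Cscr1r_part r (T j)" and "adj (T i) x \<in> Cscr1r_part r (T j)"
proof -
  show "T i x \<in> Cscr1r_part r (T j)"
  proof (cases "i = j")
    case False
    show ?thesis
    proof (rule Cscr1r_part_commuting_invariant [OF bounded_op_linear [OF bounded [OF i]] _ _ x])
      show "T i (T j y) = T j (T i y)" for y
        by (rule T_commute [OF i j])
      show "T i (adj (T j) y) = adj (T j) (T i y)" for y
        by (rule T_adj_commute [OF i j False])
    qed
  qed (use x Cscr1r_part_invariant in simp)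
  show "adj (T i) x \<in> Cscr1r_part r (T j)"
  proof (cases "i = j")
    case False
    show ?thesis
    proof (rule Cscr1r_part_commuting_invariant
        [OF bounded_op_linear [OF bounded_op_adj [OF bounded [OF i]]] _ _ x])
      show "adj (T i) (T j y) = T j (adj (T i) y)" for y
        using T_adj_commute [OF j i] False by simp
      show "adj (T i) (adj (T j) y) = adj (T j) (adj (T i) y)" for y
        by (rule adj_adj_commute [OF i j])
    qed
  qed (use x Cscr1r_part_invariant in simp)
qed

lemma type_part_T_invariant:
  assumes i: "i \<in> {1..d}" and j: "j \<in> {1..d}"
  shows "T i ` type_part r (T j) t \<subseteq> type_part r (T j) t"
    and "adj (T i) ` type_part r (T j) t \<subseteq> type_part r (T j) t"
proof -
  have T_inv: "T i ` Cscr1r_part r (T j) \<subseteq> Cscr1r_part r (T j)"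
    and adj_inv: "adj (T i) ` Cscr1r_part r (T j) \<subseteq> Cscr1r_part r (T j)"
    using Cscr1r_part_T_invariant [OF i j] by blast+
  show "T i ` type_part r (T j) t \<subseteq> type_part r (T j) t"
    by (rule type_part_invariant [OF cinner_adj_left [OF bounded [OF i]] T_inv adj_inv])
  show "adj (T i) ` type_part r (T j) t \<subseteq> type_part r (T j) t"
    by (rule type_part_invariant [OF cinner_adj_right [OF bounded [OF i]] adj_inv T_inv])
qed

lemma type_part_proj_invariant:
  assumes k: "k \<in> {1..d}" and j: "j \<in> {1..d}"
  shows "proj (Cscr1r_part r (T k)) ` type_part r (T j) t \<subseteq> type_part r (T j) t"
proof -
  have P: "closed_subspace (Cscr1r_part r (T k))"
    by (rule closed_subspace_Cscr1r_part [OF bounded [OF k]])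
  have "proj (Cscr1r_part r (T k)) x \<in> Cscr1r_part r (T j)" if "x \<in> Cscr1r_part r (T j)" for x
  proof (rule Cscr1r_part_commuting_invariant [OF linear_proj [OF P] _ _ that])
    show "proj (Cscr1r_part r (T k)) (T j y) = T j (proj (Cscr1r_part r (T k)) y)" for y
      using type_part_T_invariant(1) [OF j k, of r t1] type_part_T_invariant(1) [OF j k, of r t2]
      by (intro proj_commute [OF P bounded_op_linear [OF bounded [OF j]]]) simp_all
    show "proj (Cscr1r_part r (T k)) (adj (T j) y) = adj (T j) (proj (Cscr1r_part r (T k)) y)" for y
      using type_part_T_invariant(2) [OF j k, of r t1] type_part_T_invariant(2) [OF j k, of r t2]
      by (intro proj_commute [OF P bounded_op_linear [OF bounded_op_adj [OF bounded [OF j]]]])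
        simp_all
  qed
  then have "proj (Cscr1r_part r (T k)) ` Cscr1r_part r (T j) \<subseteq> Cscr1r_part r (T j)"
    by blast
  then show ?thesis
    using type_part_invariant [OF cinner_proj_commute [OF P]] by blast
qed

definition joint_part :: "real \<Rightarrow> nat set \<Rightarrow> (nat \<Rightarrow> optype) \<Rightarrow> 'a set" where
  "joint_part r J \<omega> = (\<Inter>j\<in>J. type_part r (T j) (\<omega> j))"

lemma closed_subspace_joint_part: "J \<subseteq> {1..d} \<Longrightarrow> closed_subspace (joint_part r J \<omega>)"
  unfolding joint_part_def by (intro closed_subspace_INT closed_subspace_type_part bounded) blast

lemma joint_part_invariant:
  assumes "\<And>j. j \<in> J \<Longrightarrow> A ` type_part r (T j) (\<omega> j) \<subseteq> type_part r (T j) (\<omega> j)"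
  shows "A ` joint_part r J \<omega> \<subseteq> joint_part r J \<omega>"
  using assms unfolding joint_part_def by blast

lemma reduces_joint_part:
  assumes "i \<in> {1..d}" and "J \<subseteq> {1..d}"
  shows "reduces_in UNIV (joint_part r J \<omega>) (T i)"
proof -
  have "T i ` joint_part r J \<omega> \<subseteq> joint_part r J \<omega>"
    and "adj (T i) ` joint_part r J \<omega> \<subseteq> joint_part r J \<omega>"
    using type_part_T_invariant [OF assms(1)] assms(2) by (intro joint_part_invariant; blast)+
  then show ?thesis
    using closed_subspace_joint_part [OF assms(2)]
    by (simp add: reduces_in_UNIV_iff [OF bounded [OF assms(1)]])
qed

lemma joint_part_proj_invariant:
  assumes k: "k \<in> {1..d}" and J: "J \<subseteq> {1..d}"
  shows "proj (type_part r (T k) t) ` joint_part r J \<omega> \<subseteq> joint_part r J \<omega>"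
proof (rule joint_part_invariant)
  fix j
  assume "j \<in> J"
  then have j: "j \<in> {1..d}"
    using J by blast
  show "proj (type_part r (T k) t) ` type_part r (T j) (\<omega> j) \<subseteq> type_part r (T j) (\<omega> j)"
  proof (cases t)
    case t2
    have "y - proj (Cscr1r_part r (T k)) y \<in> type_part r (T j) (\<omega> j)"
      if "y \<in> type_part r (T j) (\<omega> j)" for y
      using that type_part_proj_invariant [OF k j]
      by (blast intro: closed_subspace_diff closed_subspace_type_part bounded [OF j])
    then show ?thesis
      using t2 by (auto simp: proj_orth_eq closed_subspace_Cscr1r_part bounded [OF k])
  qed (simp add: type_part_proj_invariant [OF k j])
qed

lemma joint_parts_orthogonal:
  assumes "j \<in> J" and "\<omega> j \<noteq> \<omega>' j" and "x \<in> joint_part r J \<omega>" and "y \<in> joint_part r J \<omega>'"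
  shows "cinner x y = 0"
proof -
  have "x \<in> type_part r (T j) (\<omega> j)" and "y \<in> type_part r (T j) (\<omega>' j)"
    using assms by (auto simp: joint_part_def)
  then show ?thesis
    using assms(2) by (cases "\<omega> j"; cases "\<omega>' j") (auto intro: cinner_orth_left cinner_orth_right)
qed

lemma joint_parts_span:
  assumes "finite J" and "J \<subseteq> {1..d}"
  shows "\<exists>f. (\<forall>g\<in>J \<rightarrow>\<^sub>E UNIV. f g \<in> joint_part r J g) \<and> x = (\<Sum>g\<in>J \<rightarrow>\<^sub>E UNIV. f g)"
  using assms
proof (induction J arbitrary: x rule: finite_induct)
  case empty
  show ?case
    by (intro exI [of _ "\<lambda>_. x"]) (simp add: joint_part_def)
next
  case (insert a J)
  then have J: "J \<subseteq> {1..d}" and a: "a \<in> {1..d}"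
    by auto
  obtain f where f: "\<forall>g\<in>J \<rightarrow>\<^sub>E UNIV. f g \<in> joint_part r J g"
    and x: "x = (\<Sum>g\<in>J \<rightarrow>\<^sub>E UNIV. f g)"
    using insert.IH [OF J] by blast
  \<comment> \<open>split each component further along \<open>Cscr1r_part r (T a)\<close> and its complement\<close>
  define f' where "f' g = proj (type_part r (T a) (g a)) (f (g(a := undefined)))" for g
  have "f' g \<in> joint_part r (insert a J) g" if g: "g \<in> insert a J \<rightarrow>\<^sub>E UNIV" for g
  proof -
    have "g(a := undefined) \<in> J \<rightarrow>\<^sub>E UNIV"
      using fun_upd_in_PiE [OF insert.hyps(2) g] .
    moreover have "joint_part r J (g(a := undefined)) = joint_part r J g"
      unfolding joint_part_def using insert.hyps(2) by (intro INF_cong) auto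
    ultimately have "f (g(a := undefined)) \<in> joint_part r J g"
      using f by metis
    then have "f' g \<in> joint_part r J g"
      unfolding f'_def using joint_part_proj_invariant [OF a J] by blast
    moreover have "f' g \<in> type_part r (T a) (g a)"
      unfolding f'_def by (rule proj_in [OF closed_subspace_type_part [OF bounded [OF a]]])
    ultimately show ?thesis
      by (simp add: joint_part_def)
  qed
  moreover have "(\<Sum>g\<in>insert a J \<rightarrow>\<^sub>E UNIV. f' g) = x"
  proof -
    have "(\<Sum>y\<in>UNIV. f' (g(a := y))) = f g" if "g \<in> J \<rightarrow>\<^sub>E UNIV" for g
    proof -
      have "(g(a := y))(a := undefined) = g" for y
        using that insert.hyps(2) by (auto simp: fun_eq_iff PiE_def extensional_def)
      then show ?thesis
        by (simp add: f'_def sum_proj_type_part [OF bounded [OF a]])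
    qed
    then show ?thesis
      by (simp add: sum_PiE_insert [OF insert.hyps(2)] x)
  qed
  ultimately show ?case
    by blast
qed

lemma joint_parts_span_relabelled:
  assumes lab: "bij_betw lab (Omega d) I"
  shows "\<exists>f. (\<forall>j\<in>I. f j \<in> joint_part r {1..d} (the_inv_into (Omega d) lab j)) \<and> x = sum f I"
proof -
  obtain f where f: "\<forall>\<omega>\<in>Omega d. f \<omega> \<in> joint_part r {1..d} \<omega>" and x: "x = (\<Sum>\<omega>\<in>Omega d. f \<omega>)"
    using joint_parts_span [of "{1..d}" r x] unfolding Omega_def by auto
  have g: "the_inv_into (Omega d) lab j \<in> Omega d" if "j \<in> I" for j
    using bij_betwE [OF bij_betw_the_inv_into [OF lab]] that by blast
  have "(\<Sum>j\<in>I. f (the_inv_into (Omega d) lab j))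
      = (\<Sum>\<omega>\<in>Omega d. f (the_inv_into (Omega d) lab (lab \<omega>)))"
    by (rule sum.reindex_bij_betw [OF lab, symmetric])
  also have "\<dots> = x"
    using the_inv_into_f_f [OF bij_betw_imp_inj_on [OF lab]] by (simp add: x)
  finally show ?thesis
    using f g by (intro exI [of _ "f \<circ> the_inv_into (Omega d) lab"]) auto
qed

lemma joint_parts_Omega_orthogonal:
  assumes "\<omega> \<in> Omega d" and "\<omega>' \<in> Omega d" and "\<omega> \<noteq> \<omega>'"
    and "x \<in> joint_part r {1..d} \<omega>" and "y \<in> joint_part r {1..d} \<omega>'"
  shows "cinner x y = 0"
proof -
  obtain i where "i \<in> {1..d}" and "\<omega> i \<noteq> \<omega>' i"
    using assms(1-3) PiE_ext [of \<omega> "{1..d}" "\<lambda>_. UNIV" \<omega>'] unfolding Omega_def by blast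
  then show ?thesis
    using joint_parts_orthogonal assms(4,5) by blast
qed

end

lemma restrict_const_eq_iff: "(\<lambda>_\<in>A. a) = (\<lambda>_\<in>A. b) \<longleftrightarrow> A = {} \<or> a = b"
proof
  assume eq: "(\<lambda>_\<in>A. a) = (\<lambda>_\<in>A. b)"
  show "A = {} \<or> a = b"
  proof (cases "A = {}")
    case False
    then obtain x where "x \<in> A"
      by blast
    then show ?thesis
      using fun_cong [OF eq, of x] by simp
  qed simp
qed auto

lemma bij_betw_atLeastAtMost_fixing_ends:
  assumes "finite A" and "card A = n" and "a \<in> A" and "b \<in> A" and ab: "a = b \<longleftrightarrow> n = 1"
  obtains lab where "bij_betw lab A {1..n}" and "lab a = 1" and "lab b = n"
proof -
  have "n \<ge> 1"
    using assms by (metis One_nat_def Suc_leI card_gt_0_iff empty_iff)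
  obtain h where h: "bij_betw h A {1..n}"
    using finite_same_card_bij [OF \<open>finite A\<close> finite_atLeastAtMost [of 1 n]] assms by auto
  have "h a \<in> {1..n}" and "h b \<in> {1..n}"
    using bij_betwE [OF h] \<open>a \<in> A\<close> \<open>b \<in> A\<close> by blast+
  define h1 where "h1 = Transposition.transpose (h a) 1 \<circ> h"
  have h1: "bij_betw h1 A {1..n}"
    unfolding h1_def using \<open>h a \<in> {1..n}\<close> \<open>n \<ge> 1\<close>
    by (intro bij_betw_trans [OF h] bij_betw_transpose_iff) simp
  have "h1 a = 1"
    by (simp add: h1_def)
  define lab where "lab = Transposition.transpose (h1 b) n \<circ> h1"
  have "h1 b \<in> {1..n}"
    using bij_betwE [OF h1] \<open>b \<in> A\<close> by blast
  then have "bij_betw lab A {1..n}"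
    unfolding lab_def using \<open>n \<ge> 1\<close>
    by (intro bij_betw_trans [OF h1] bij_betw_transpose_iff) simp
  moreover have "lab b = n"
    by (simp add: lab_def)
  moreover have "lab a = 1"
  proof (cases "a = b")
    case False
    then have "h1 b \<noteq> 1"
      using \<open>h1 a = 1\<close> h1 \<open>a \<in> A\<close> \<open>b \<in> A\<close> by (metis bij_betw_iff_bijections)
    then show ?thesis
      using False ab \<open>h1 a = 1\<close> by (simp add: lab_def transpose_def)
  qed (use ab \<open>h1 a = 1\<close> in \<open>simp add: lab_def\<close>)
  ultimately show ?thesis
    using that by blast
qed

lemma card_Omega: "card (Omega d) = 2 ^ d"
  by (simp add: Omega_def card_PiE UNIV_optype numeral_2_eq_2)

lemma finite_Omega: "finite (Omega d)"
  by (simp add: Omega_def finite_PiE UNIV_optype)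

locale C1r_tuple = doubly_commuting_tuple +
  fixes r :: real
  assumes C1r: "\<And>i. i \<in> {1..d} \<Longrightarrow> C1r UNIV r (T i)"
    and r_square: "r\<^sup>2 \<noteq> 1"
begin

lemma joint_part_has_type:
  assumes "i \<in> {1..d}"
  shows "has_type (joint_part r {1..d} \<omega>) r (T i) (\<omega> i)"
proof -
  have "joint_part r {1..d} \<omega> \<subseteq> type_part r (T i) (\<omega> i)"
    using assms by (auto simp: joint_part_def)
  then show ?thesis
    using assms reduces_joint_part [OF assms]
    by (simp add: has_type_iff_subset_type_part [OF bounded C1r r_square])
qed

lemma reducing_subset_joint_part:
  assumes "\<forall>i\<in>{1..d}. reduces_in UNIV M (T i) \<and> has_type M r (T i) (\<omega> i)"
  shows "M \<subseteq> joint_part r {1..d} \<omega>"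
proof -
  have "M \<subseteq> type_part r (T i) (\<omega> i)" if i: "i \<in> {1..d}" for i
    using assms i has_type_iff_subset_type_part [OF bounded [OF i] C1r [OF i] r_square] by blast
  then show ?thesis
    unfolding joint_part_def by blast
qed

lemma is_decomposition_subset_joint_part:
  assumes D: "is_decomposition d r T Hs lab" and \<omega>: "\<omega> \<in> Omega d"
  shows "Hs (lab \<omega>) \<subseteq> joint_part r {1..d} \<omega>"
proof (rule reducing_subset_joint_part)
  have "lab \<omega> \<in> {1..2^d}"
    using D \<omega> by (auto simp: is_decomposition_def dest: bij_betwE)
  then have "\<forall>i\<in>{1..d}. reduces_in UNIV (Hs (lab \<omega>)) (T i)"
    using D by (simp add: is_decomposition_def)
  moreover have "\<forall>i\<in>{1..d}. has_type (Hs (lab \<omega>)) r (T i) (\<omega> i)"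
    using D \<omega> by (simp add: is_decomposition_def)
  ultimately show
    "\<forall>i\<in>{1..d}. reduces_in UNIV (Hs (lab \<omega>)) (T i) \<and> has_type (Hs (lab \<omega>)) r (T i) (\<omega> i)"
    by blast
qed

lemma is_decomposition_unique:
  assumes D: "is_decomposition d r T Hs lab" and \<omega>: "\<omega> \<in> Omega d"
  shows "Hs (lab \<omega>) = joint_part r {1..d} \<omega>"
proof -
  have lab: "bij_betw lab (Omega d) {1..2^d}"
    using D by (simp add: is_decomposition_def)
  have span: "\<forall>x. \<exists>f. (\<forall>j\<in>{1..2^d}. f j \<in> Hs j) \<and> x = (\<Sum>j=1..2^d. f j)"
    using D unfolding is_decomposition_def by (elim conjE)
  note sub = is_decomposition_subset_joint_part [OF D]
  have "x \<in> Hs (lab \<omega>)" if x: "x \<in> joint_part r {1..d} \<omega>" for x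
  proof -
    obtain f where f: "\<forall>j\<in>{1..2^d}. f j \<in> Hs j" and x_sum: "x = (\<Sum>j=1..2^d. f j)"
      using span by blast
    have j0: "lab \<omega> \<in> {1..2^d}"
      using bij_betwE [OF lab] \<omega> by blast
    then have f_j0: "f (lab \<omega>) \<in> joint_part r {1..d} \<omega>"
      using f sub [OF \<omega>] by blast
    have f_orth: "f j \<in> orth (joint_part r {1..d} \<omega>)" if j: "j \<in> {1..2^d} - {lab \<omega>}" for j
    proof -
      define \<omega>' where "\<omega>' = the_inv_into (Omega d) lab j"
      have \<omega>': "\<omega>' \<in> Omega d"
        using bij_betwE [OF bij_betw_the_inv_into [OF lab]] j unfolding \<omega>'_def by blast
      have "lab \<omega>' = j"
        unfolding \<omega>'_def by (rule f_the_inv_into_f_bij_betw [OF lab]) (use j in blast)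
      then have "f j \<in> Hs (lab \<omega>')" and "\<omega> \<noteq> \<omega>'"
        using f j by auto
      then have "f j \<in> joint_part r {1..d} \<omega>'" and "\<omega> \<noteq> \<omega>'"
        using sub [OF \<omega>'] by blast+
      then show ?thesis
        unfolding orth_def using joint_parts_Omega_orthogonal [OF \<omega> \<omega>'] by blast
    qed
    have "x = f (lab \<omega>)"
      by (rule sum_eq_component_in_subspace [OF closed_subspace_joint_part [OF subset_refl]
            finite_atLeastAtMost j0 x f_j0 f_orth x_sum])
    then show ?thesis
      using f j0 by simp
  qed
  then show ?thesis
    using sub [OF \<omega>] by blast
qed

lemma is_decomposition_joint_parts:
  assumes lab: "bij_betw lab (Omega d) {1..2^d}"
    and lab_t1: "lab (\<lambda>_\<in>{1..d}. t1) = 1" and lab_t2: "lab (\<lambda>_\<in>{1..d}. t2) = 2^d"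
  shows "is_decomposition d r T (\<lambda>j. joint_part r {1..d} (the_inv_into (Omega d) lab j)) lab"
proof -
  define g where "g = the_inv_into (Omega d) lab"
  have g: "g j \<in> Omega d" if "j \<in> {1..2^d}" for j
    using bij_betwE [OF bij_betw_the_inv_into [OF lab]] that unfolding g_def by blast
  have lab_g: "lab (g j) = j" if "j \<in> {1..2^d}" for j
    unfolding g_def by (rule f_the_inv_into_f_bij_betw [OF lab]) (use that in blast)
  have g_lab: "g (lab \<omega>) = \<omega>" if "\<omega> \<in> Omega d" for \<omega>
    using the_inv_into_f_f [OF bij_betw_imp_inj_on [OF lab] that] by (simp add: g_def)
  have g_1: "g 1 = (\<lambda>_\<in>{1..d}. t1)" and g_2d: "g (2^d) = (\<lambda>_\<in>{1..d}. t2)"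
    using g_lab [of "\<lambda>_\<in>{1..d}. t1"] g_lab [of "\<lambda>_\<in>{1..d}. t2"] lab_t1 lab_t2
    by (simp_all add: Omega_def)
  show ?thesis
    unfolding is_decomposition_def g_def [symmetric]
  proof (intro conjI ballI allI impI)
    show "closed_subspace (joint_part r {1..d} (g j))" for j
      by (simp add: closed_subspace_joint_part)
    show "cinner x y = 0" if "j \<in> {1..2^d}" "k \<in> {1..2^d}" "j \<noteq> k"
      and "x \<in> joint_part r {1..d} (g j)" "y \<in> joint_part r {1..d} (g k)" for j k x y
    proof -
      have "g j \<noteq> g k"
        using lab_g [OF that(1)] lab_g [OF that(2)] that(3) by metis
      then show ?thesis
        using joint_parts_Omega_orthogonal [OF g [OF that(1)] g [OF that(2)]] that(4,5) by blast
    qed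
    show "\<exists>f. (\<forall>j\<in>{1..2^d}. f j \<in> joint_part r {1..d} (g j)) \<and> x = (\<Sum>j=1..2^d. f j)" for x
      unfolding g_def by (rule joint_parts_span_relabelled [OF lab])
    show "reduces_in UNIV (joint_part r {1..d} (g j)) (T i)" if "i \<in> {1..d}" for i j
      using that by (simp add: reduces_joint_part)
    show "has_type (joint_part r {1..d} (g j)) r (T i) t1
        \<or> has_type (joint_part r {1..d} (g j)) r (T i) t2"
      if "i \<in> {1..d}" for i j
      using joint_part_has_type [OF that, of "g j"] by (cases "g j i") auto
    show "bij_betw lab (Omega d) {1..2^d}"
      by (rule lab)
    show "has_type (joint_part r {1..d} (g (lab \<omega>))) r (T j) (\<omega> j)"
      if "\<omega> \<in> Omega d" "j \<in> {1..d}" for \<omega> j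
      using joint_part_has_type [OF that(2)] g_lab [OF that(1)] by simp
    show "has_type (joint_part r {1..d} (g 1)) r (T i) t1" if "i \<in> {1..d}" for i
      unfolding g_1 using joint_part_has_type [OF that, of "\<lambda>_\<in>{1..d}. t1"] that by simp
    show "M \<subseteq> joint_part r {1..d} (g 1)"
      if "\<forall>i\<in>{1..d}. reduces_in UNIV M (T i) \<and> has_type M r (T i) t1" for M
      unfolding g_1 using that by (intro reducing_subset_joint_part) simp
    show "has_type (joint_part r {1..d} (g (2^d))) r (T i) t2" if "i \<in> {1..d}" for i
      unfolding g_2d using joint_part_has_type [OF that, of "\<lambda>_\<in>{1..d}. t2"] that by simp
    show "M \<subseteq> joint_part r {1..d} (g (2^d))"
      if "\<forall>i\<in>{1..d}. reduces_in UNIV M (T i) \<and> has_type M r (T i) t2" for M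
      unfolding g_2d using that by (intro reducing_subset_joint_part) simp
  qed
qed

end

theorem theorem3p7:
  fixes r :: real and d :: nat and T :: "nat \<Rightarrow> 'a::chilbert_space \<Rightarrow> 'a"
  assumes "0 < r" and "r < 1"
    and "\<forall>i\<in>{1..d}. bounded_op (T i) \<and> C1r UNIV r (T i)"
    and "doubly_commuting d T"
  shows "\<exists>Hs lab. is_decomposition d r T Hs lab
           \<and> (\<forall>Hs' lab'. is_decomposition d r T Hs' lab' \<longrightarrow> (\<forall>\<omega>\<in>Omega d. Hs' (lab' \<omega>) = Hs (lab \<omega>)))"
proof -
  have "r\<^sup>2 < 1"
    using assms(1,2) by (simp add: power_less_one_iff abs_less_iff)
  interpret C1r_tuple d T r
    by unfold_locales (use assms(3,4) \<open>r\<^sup>2 < 1\<close> in auto)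
  have const_Omega: "(\<lambda>_\<in>{1..d}. t) \<in> Omega d" for t
    by (simp add: Omega_def)
  have "(\<lambda>_\<in>{1..d}. t1) = (\<lambda>_\<in>{1..d}. t2) \<longleftrightarrow> (2::nat) ^ d = 1"
    by (simp add: restrict_const_eq_iff, arith)
  then obtain lab :: "(nat \<Rightarrow> optype) \<Rightarrow> nat" where lab: "bij_betw lab (Omega d) {1..2^d}"
    and "lab (\<lambda>_\<in>{1..d}. t1) = 1" and "lab (\<lambda>_\<in>{1..d}. t2) = 2^d"
    by (rule bij_betw_atLeastAtMost_fixing_ends
        [OF finite_Omega card_Omega const_Omega const_Omega])
  define Hs where "Hs j = joint_part r {1..d} (the_inv_into (Omega d) lab j)" for j
  have Hs_lab: "Hs (lab \<omega>) = joint_part r {1..d} \<omega>" if "\<omega> \<in> Omega d" for \<omega>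
    using the_inv_into_f_f [OF bij_betw_imp_inj_on [OF lab] that] by (simp add: Hs_def)
  show ?thesis
  proof (intro exI conjI allI impI ballI)
    show "is_decomposition d r T Hs lab"
      unfolding Hs_def using lab by (rule is_decomposition_joint_parts) fact+
    show "Hs' (lab' \<omega>) = Hs (lab \<omega>)" if "is_decomposition d r T Hs' lab'" and "\<omega> \<in> Omega d"
      for Hs' lab' \<omega>
      using is_decomposition_unique [OF that] Hs_lab [OF that(2)] by simp
  qed
qed

end
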